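(* Let $n,k,r$ be integers with $k,r\geq 2$ and $n\geq k+1$. If $H$ is a vertex-$k$-maximal $r$-uniform hypergraph on $n$ vertices, then $|E(H)|\geq \binom{n}{r}-\binom{n-k}{r}$.
   Context: Binomial coefficients satisfy $\binom{a}{b}=0$ when $b>a$. A hypergraph $H=(V,E)$ consists of a finite vertex set $V$ and a set $E$ of non-empty subsets of $V$ (edges); it is $r$-uniform if all edges have exactly $r$ elements. The complement $H^c$ has as edges the $r$-subsets of $V$ not in $E$. A subhypergraph is $H'=(V',E')$ with $V'\subseteq V$, $E'\subseteq E$. $H+e=(V,E\cup\{e\})$ for $e\in E(H^c)$. $H-Y$ is the hypergraph induced on $V\setminus Y$ (keeping edges contained in $V\setminus Y$). Connectedness is defined via paths (alternating sequences of distinct vertices and distinct edges with consecutive vertices in the intermediate edge). A vertex-cut is a set $X$ with $H-X$ disconnected. $\kappa(H)$ is the minimum size of a vertex-cut if one exists, and $|V(H)|-1$ otherwise. $\overline{\kappa}(H)=\max\{\kappa(H'): H'\subseteq H\}$. An $r$-uniform hypergraph $H$ is vertex-$k$-maximal if $\overline{\kappa}(H)\leq k$ but $\overline{\kappa}(H+e)\geq k+1$ for every $e\in E(H^c)$. *)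

theory Defs
  imports Main
begin

definition hypergraph :: "'a set \<Rightarrow> 'a set set \<Rightarrow> bool" where
  "hypergraph V E \<longleftrightarrow> finite V \<and> (\<forall>e\<in>E. e \<noteq> {} \<and> e \<subseteq> V)"

definition uniform :: "nat \<Rightarrow> 'a set \<Rightarrow> 'a set set \<Rightarrow> bool" where
  "uniform r V E \<longleftrightarrow> hypergraph V E \<and> (\<forall>e\<in>E. card e = r)"

definition compl_edges :: "nat \<Rightarrow> 'a set \<Rightarrow> 'a set set \<Rightarrow> 'a set set" where
  "compl_edges r V E = {e. e \<subseteq> V \<and> card e = r \<and> e \<notin> E}"

definition is_path :: "'a set \<Rightarrow> 'a set set \<Rightarrow> 'a list \<Rightarrow> 'a set list \<Rightarrow> bool" where
  "is_path V E vs es \<longleftrightarrow> vs \<noteq> [] \<and> length es + 1 = length vs \<and>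
     distinct vs \<and> distinct es \<and> set vs \<subseteq> V \<and> set es \<subseteq> E \<and>
     (\<forall>i < length es. vs ! i \<in> es ! i \<and> vs ! (Suc i) \<in> es ! i)"

definition connected_hg :: "'a set \<Rightarrow> 'a set set \<Rightarrow> bool" where
  "connected_hg V E \<longleftrightarrow> (\<forall>u\<in>V. \<forall>v\<in>V. \<exists>vs es. is_path V E vs es \<and> hd vs = u \<and> last vs = v)"

definition vertex_cut :: "'a set \<Rightarrow> 'a set set \<Rightarrow> 'a set \<Rightarrow> bool" where
  "vertex_cut V E X \<longleftrightarrow> X \<subseteq> V \<and> \<not> connected_hg (V - X) {e\<in>E. e \<subseteq> V - X}"

definition kappa :: "'a set \<Rightarrow> 'a set set \<Rightarrow> int" where
  "kappa V E = (if \<exists>X. vertex_cut V E X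
                then int (Min {card X | X. vertex_cut V E X})
                else int (card V) - 1)"

definition kappa_bar :: "'a set \<Rightarrow> 'a set set \<Rightarrow> int" where
  "kappa_bar V E = Max {kappa V' E' | V' E'. V' \<subseteq> V \<and> E' \<subseteq> E \<and> hypergraph V' E'}"

definition vertex_k_maximal :: "nat \<Rightarrow> nat \<Rightarrow> 'a set \<Rightarrow> 'a set set \<Rightarrow> bool" where
  "vertex_k_maximal r k V E \<longleftrightarrow> uniform r V E \<and> kappa_bar V E \<le> int k \<and>
     (\<forall>e\<in>compl_edges r V E. kappa_bar V (insert e E) \<ge> int k + 1)"

end

theory Submission
  imports Defs
begin

text \<open>Call an r-set f of V raising if adding it to E pushes \<open>kappa_bar\<close> above k; in a
vertex-k-maximal hypergraph every non-edge is raising, so it suffices to show that at most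
\<open>(n - k) choose r\<close> r-sets are raising when \<open>kappa_bar V E \<le> k\<close>. If \<open>|V| \<ge> k + 2\<close>, the
hypergraph has a separator X of size exactly k splitting \<open>V - X\<close> into non-empty parts A, B
with no edge meeting both. A subhypergraph of \<open>E + f\<close> of connectivity \<open>> k\<close> must contain f
and stays connected after deleting X, so either f meets both A and B, or f is already raising
inside \<open>A \<union> X\<close> or \<open>B \<union> X\<close>. Induction on |V| bounds the latter two kinds by
\<open>|A| choose r\<close> and \<open>|B| choose r\<close>, and the three kinds together are at most
\<open>(|A| + |B|) choose r\<close>.\<close>

subsection \<open>Paths and reachability\<close>

definition reachable :: "'a set \<Rightarrow> 'a set set \<Rightarrow> 'a \<Rightarrow> 'a \<Rightarrow> bool" where
  "reachable V E u v \<longleftrightarrow> (\<exists>vs es. is_path V E vs es \<and> hd vs = u \<and> last vs = v)"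

lemma connected_hg_iff_reachable: "connected_hg V E \<longleftrightarrow> (\<forall>u\<in>V. \<forall>v\<in>V. reachable V E u v)"
  unfolding connected_hg_def reachable_def ..

lemma reachable_refl: "u \<in> V \<Longrightarrow> reachable V E u u"
  unfolding reachable_def is_path_def by (intro exI[of _ "[u]"] exI[of _ "[]"]) auto

lemma list_ex_crossing:
  "xs \<noteq> [] \<Longrightarrow> hd xs \<in> S \<Longrightarrow> last xs \<notin> S \<Longrightarrow>
   \<exists>i. Suc i < length xs \<and> xs ! i \<in> S \<and> xs ! Suc i \<notin> S"
proof (induction xs)
  case Nil
  then show ?case by simp
next
  case (Cons a xs)
  show ?case
  proof (cases "xs = []")
    case True
    then show ?thesis using Cons.prems by simp
  next
    case nonempty: False
    show ?thesis
    proof (cases "hd xs \<in> S")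
      case True
      then obtain i where "Suc i < length xs" "xs ! i \<in> S" "xs ! Suc i \<notin> S"
        using Cons nonempty by auto
      then show ?thesis by (intro exI[of _ "Suc i"]) auto
    next
      case False
      then show ?thesis using Cons.prems nonempty by (intro exI[of _ 0]) (auto simp: hd_conv_nth)
    qed
  qed
qed

lemma is_path_take:
  assumes "is_path V E vs es" "j < length vs"
  shows "is_path V E (take (Suc j) vs) (take j es)"
    and "hd (take (Suc j) vs) = hd vs" and "last (take (Suc j) vs) = vs ! j"
proof -
  have len: "length es + 1 = length vs" "vs \<noteq> []"
    using assms(1) unfolding is_path_def by auto
  show "is_path V E (take (Suc j) vs) (take j es)"
    using assms len unfolding is_path_def by (auto dest: in_set_takeD simp: min_def)
  show "hd (take (Suc j) vs) = hd vs" using len by (cases vs) auto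
  show "last (take (Suc j) vs) = vs ! j"
    by (simp add: take_Suc_conv_app_nth[OF assms(2)])
qed

lemma is_path_snoc:
  assumes "is_path V E vs es" "z \<in> V" "z \<notin> set vs" "g \<in> E" "g \<notin> set es"
    "last vs \<in> g" "z \<in> g"
  shows "is_path V E (vs @ [z]) (es @ [g])"
proof -
  have len: "length es + 1 = length vs" "vs \<noteq> []"
    using assms(1) unfolding is_path_def by auto
  have last: "last vs = vs ! length es" using len by (simp add: last_conv_nth flip: len(1))
  have "(vs @ [z]) ! i \<in> (es @ [g]) ! i \<and> (vs @ [z]) ! Suc i \<in> (es @ [g]) ! i"
    if i: "i < length (es @ [g])" for i
  proof -
    consider "i < length es" | "i = length es" using i by fastforce
    then show ?thesis using assms(1,6,7) len last unfolding is_path_def by cases (auto simp: nth_append)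
  qed
  then show ?thesis using assms len unfolding is_path_def by auto
qed

text \<open>Paths may not repeat edges: if g already lies on the path, cut the path at the tail
vertex of g before stepping to z.\<close>

lemma reachable_edge_step:
  assumes "reachable V E u w" "g \<in> E" "w \<in> g" "z \<in> g" "z \<in> V"
  shows "reachable V E u z"
proof -
  obtain vs es where p: "is_path V E vs es" "hd vs = u" "last vs = w"
    using assms(1) unfolding reachable_def by blast
  have len: "length es + 1 = length vs" "distinct es" "vs \<noteq> []"
    using p(1) unfolding is_path_def by auto
  obtain i where i: "i \<le> length es" "vs ! i \<in> g" "g \<notin> set (take i es)"
  proof (cases "g \<in> set es")
    case True
    then obtain i where "i < length es" "es ! i = g" by (auto simp: in_set_conv_nth)
    moreover have "vs ! i \<in> es ! i" using p(1) \<open>i < length es\<close> unfolding is_path_def by auto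
    moreover have "g \<notin> set (take i es)"
      using \<open>i < length es\<close> \<open>es ! i = g\<close> set_take_disj_set_drop_if_distinct[OF len(2) order_refl, of i]
      by (metis Cons_nth_drop_Suc disjoint_iff list.set_intros(1))
    ultimately show ?thesis using that[of i] by simp
  next
    case False
    then show ?thesis
      using that[of "length es"] p(3) len(3) assms(3) by (simp add: last_conv_nth flip: len(1))
  qed
  have i_lt: "i < length vs" using i(1) len(1) by simp
  note prefix = is_path_take[OF p(1) i_lt]
  show ?thesis
  proof (cases "z \<in> set (take (Suc i) vs)")
    case True
    then obtain j where "j < length (take (Suc i) vs)" "take (Suc i) vs ! j = z"
      by (auto simp: in_set_conv_nth)
    then show ?thesis
      using is_path_take[OF prefix(1), of j] prefix(2) p(2) unfolding reachable_def
      by (metis hd_take length_take min_less_iff_conj take_all_iff zero_less_Suc)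
  next
    case False
    then have "is_path V E (take (Suc i) vs @ [z]) (take i es @ [g])"
      using is_path_snoc[OF prefix(1)] prefix(3) i assms(2,4,5) by auto
    then show ?thesis using prefix(2) p(2) len(3) unfolding reachable_def
      by (intro exI[of _ "take (Suc i) vs @ [z]"] exI[of _ "take i es @ [g]"])
        (auto simp: is_path_def)
  qed
qed

lemma connected_hg_crossing_edge:
  assumes "connected_hg V E" "u \<in> V" "u \<in> S" "v \<in> V" "v \<notin> S"
  shows "\<exists>g\<in>E. g \<inter> S \<noteq> {} \<and> g - S \<noteq> {}"
proof -
  obtain vs es where p: "is_path V E vs es" "hd vs = u" "last vs = v"
    using assms(1,2,4) unfolding connected_hg_def by blast
  then have len: "vs \<noteq> []" "length es + 1 = length vs" unfolding is_path_def by auto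
  then obtain i where i: "Suc i < length vs" "vs ! i \<in> S" "vs ! Suc i \<notin> S"
    using list_ex_crossing[of vs S] p assms(3,5) by auto
  then have "i < length es" using len(2) by simp
  then have "es ! i \<in> E" "vs ! i \<in> es ! i" "vs ! Suc i \<in> es ! i"
    using p(1) unfolding is_path_def by auto
  then show ?thesis using i by blast
qed

lemma connected_hg_card_le_1:
  assumes "finite V" "card V \<le> 1"
  shows "connected_hg V E"
proof -
  have "u = v" if "u \<in> V" "v \<in> V" for u v
    using assms that by (metis One_nat_def card_le_Suc0_iff_eq)
  then show ?thesis unfolding connected_hg_iff_reachable by (metis reachable_refl)
qed

subsection \<open>Separations\<close>

definition separation :: "'a set \<Rightarrow> 'a set set \<Rightarrow> 'a set \<Rightarrow> 'a set \<Rightarrow> 'a set \<Rightarrow> bool" where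
  "separation V E X A B \<longleftrightarrow> X \<subseteq> V \<and> A \<inter> B = {} \<and> A \<union> B = V - X \<and> A \<noteq> {} \<and> B \<noteq> {} \<and>
     (\<forall>e\<in>E. e \<subseteq> V - X \<longrightarrow> e \<inter> A = {} \<or> e \<inter> B = {})"

lemma separation_swap: "separation V E X A B \<Longrightarrow> separation V E X B A"
  unfolding separation_def by blast

lemma separation_move:
  "separation V E X A B \<Longrightarrow> x \<in> A \<Longrightarrow> A \<noteq> {x} \<Longrightarrow>
   separation V E (insert x X) (A - {x}) B"
  unfolding separation_def by auto

lemma vertex_cut_imp_separation:
  assumes "vertex_cut V E X"
  shows "\<exists>A B. separation V E X A B"
proof -
  let ?U = "V - X" and ?F = "{e\<in>E. e \<subseteq> V - X}"
  obtain u v where uv: "u \<in> ?U" "v \<in> ?U" "\<not> reachable ?U ?F u v"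
    using assms unfolding vertex_cut_def connected_hg_iff_reachable by blast
  define A where "A = {w\<in>?U. reachable ?U ?F u w}"
  have closed: "e \<inter> A = {} \<or> e \<inter> (?U - A) = {}" if "e \<in> E" "e \<subseteq> ?U" for e
    using reachable_edge_step[of ?U ?F u _ e] that unfolding A_def by blast
  have "u \<in> A" "v \<in> ?U - A" using uv reachable_refl[of u ?U] unfolding A_def by auto
  then have "separation V E X A (?U - A)"
    using assms closed unfolding separation_def vertex_cut_def A_def by blast
  then show ?thesis by blast
qed

lemma separation_enlarge:
  assumes "finite V" "separation V E X A B" "card X \<le> m" "m + 2 \<le> card V"
  shows "\<exists>X' A' B'. separation V E X' A' B' \<and> card X' = m"
  using assms(2,3)
proof (induction "m - card X" arbitrary: X A B)
  case 0
  then show ?case by auto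
next
  case (Suc d)
  have s: "X \<subseteq> V" "A \<inter> B = {}" "A \<union> B = V - X"
    using Suc.prems(1) unfolding separation_def by auto
  have fin: "finite X" "finite A" "finite B"
    using s assms(1) by (metis Diff_subset finite_Un finite_subset)+
  have "card A + card B = card V - card X"
    using card_Un_disjoint[OF fin(2,3) s(2)] card_Diff_subset[OF fin(1) s(1)] s(3) by simp
  then have "2 \<le> card A \<or> 2 \<le> card B" using Suc.hyps(2) assms(4) by linarith
  moreover have "\<exists>X' A' B'. separation V E X' A' B' \<and> card X' = m"
    if sep: "separation V E X A' B'" and big: "2 \<le> card A'" for A' B'
  proof -
    obtain x where x: "x \<in> A'" using big by fastforce
    then have "A' \<noteq> {x}" using big by auto
    moreover have "x \<notin> X" using sep x unfolding separation_def by blast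
    ultimately show ?thesis
      using Suc.hyps(1)[of "insert x X"] separation_move[OF sep x] Suc.hyps(2) fin(1) by simp
  qed
  ultimately show ?case using Suc.prems(1) separation_swap by blast
qed

subsection \<open>Connectivity\<close>

lemma finite_cut_cards: "finite V \<Longrightarrow> finite {card X |X. vertex_cut V E X}"
  by (rule finite_subset[of _ "{..card V}"]) (auto simp: vertex_cut_def card_mono)

lemma kappa_le_card_cut: "finite V \<Longrightarrow> vertex_cut V E X \<Longrightarrow> kappa V E \<le> int (card X)"
  unfolding kappa_def using Min_le[OF finite_cut_cards] by auto

lemma ex_cut_card_eq_kappa:
  assumes "finite V" "\<exists>X. vertex_cut V E X"
  shows "\<exists>X. vertex_cut V E X \<and> kappa V E = int (card X)"
proof -
  have "Min {card X |X. vertex_cut V E X} \<in> {card X |X. vertex_cut V E X}"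
    using Min_in[OF finite_cut_cards[OF assms(1)]] assms(2) by blast
  then show ?thesis using assms(2) unfolding kappa_def by auto
qed

lemma kappa_le_card_minus_1:
  assumes fin: "finite V"
  shows "kappa V E \<le> int (card V) - 1"
proof (cases "\<exists>X. vertex_cut V E X")
  case True
  then obtain X where X: "vertex_cut V E X" "kappa V E = int (card X)"
    using ex_cut_card_eq_kappa[OF fin] by blast
  then have "X \<subseteq> V" "\<not> card (V - X) \<le> 1"
    using connected_hg_card_le_1[of "V - X"] fin unfolding vertex_cut_def by auto
  then show ?thesis using X(2) fin card_Diff_subset[of X V] card_mono[of V X]
    by (simp add: finite_subset)
qed (simp add: kappa_def)

lemma connected_hg_delete_if_card_lt_kappa:
  assumes "finite V" "Y \<subseteq> V" "int (card Y) < kappa V E"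
  shows "connected_hg (V - Y) {e\<in>E. e \<subseteq> V - Y}"
  using kappa_le_card_cut[OF assms(1), of E Y] assms(2,3) unfolding vertex_cut_def by auto

lemma finite_kappa_values:
  assumes "finite V"
  shows "finite {kappa V' E' |V' E'. V' \<subseteq> V \<and> E' \<subseteq> E \<and> hypergraph V' E'}"
proof -
  have "{kappa V' E' |V' E'. V' \<subseteq> V \<and> E' \<subseteq> E \<and> hypergraph V' E'}
        \<subseteq> (\<lambda>(V', E'). kappa V' E') ` (Pow V \<times> Pow (Pow V))"
    unfolding hypergraph_def by fastforce
  then show ?thesis using assms finite_subset by fastforce
qed

lemma kappa_le_kappa_bar:
  "finite V \<Longrightarrow> V' \<subseteq> V \<Longrightarrow> E' \<subseteq> E \<Longrightarrow> hypergraph V' E' \<Longrightarrow> kappa V' E' \<le> kappa_bar V E"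
  unfolding kappa_bar_def by (rule Max_ge[OF finite_kappa_values]) auto

lemma kappa_bar_attained:
  assumes "finite V"
  obtains V' E' where "V' \<subseteq> V" "E' \<subseteq> E" "hypergraph V' E'" "kappa V' E' = kappa_bar V E"
proof -
  let ?K = "{kappa V' E' |V' E'. V' \<subseteq> V \<and> E' \<subseteq> E \<and> hypergraph V' E'}"
  have "kappa ({} :: 'a set) {} \<in> ?K" by (intro CollectI exI[of _ "{}"]) (simp add: hypergraph_def)
  then have "Max ?K \<in> ?K" using Max_in[OF finite_kappa_values[OF assms]] by blast
  then obtain V' E' where "Max ?K = kappa V' E'" "V' \<subseteq> V" "E' \<subseteq> E" "hypergraph V' E'"
    by (auto simp only: mem_Collect_eq)
  then show ?thesis using that unfolding kappa_bar_def by simp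
qed

lemma kappa_bar_mono:
  assumes "finite V" "V' \<subseteq> V" "E' \<subseteq> E"
  shows "kappa_bar V' E' \<le> kappa_bar V E"
proof -
  obtain V'' E'' where sub: "V'' \<subseteq> V'" "E'' \<subseteq> E'" and "hypergraph V'' E''"
    and eq: "kappa V'' E'' = kappa_bar V' E'"
    using kappa_bar_attained[OF finite_subset[OF assms(2,1)]] .
  have "kappa V'' E'' \<le> kappa_bar V E"
    using kappa_le_kappa_bar[OF assms(1) order_trans[OF sub(1) assms(2)]
        order_trans[OF sub(2) assms(3)] \<open>hypergraph V'' E''\<close>] .
  then show ?thesis using eq by simp
qed

lemma kappa_bar_insert_witness:
  assumes fin: "finite V" and "kappa_bar V E < c" "c \<le> kappa_bar V (insert f E)"
  obtains W E' where "W \<subseteq> V" "E' \<subseteq> insert f E" "hypergraph W E'" "c \<le> kappa W E'" "f \<in> E'"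
proof -
  obtain W E' where W: "W \<subseteq> V" "E' \<subseteq> insert f E" "hypergraph W E'"
    "kappa W E' = kappa_bar V (insert f E)"
    using kappa_bar_attained[OF fin] .
  have "f \<in> E'"
  proof (rule ccontr)
    assume "f \<notin> E'"
    then have "E' \<subseteq> E" using W(2) by blast
    then have "kappa W E' \<le> kappa_bar V E" using kappa_le_kappa_bar[OF fin W(1) _ W(3)] by simp
    then show False using W(4) assms(2,3) by linarith
  qed
  then show ?thesis using that W assms(3) by simp
qed

lemma ex_separation_card_eq:
  assumes "hypergraph V E" "kappa_bar V E \<le> int k" "k + 2 \<le> card V"
  shows "\<exists>X A B. separation V E X A B \<and> card X = k"
proof -
  have fin: "finite V" using assms(1) unfolding hypergraph_def by blast
  have kk: "kappa V E \<le> int k"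
    using kappa_le_kappa_bar[OF fin order_refl order_refl assms(1)] assms(2) by linarith
  then have "\<exists>X. vertex_cut V E X" using assms(3) unfolding kappa_def by (auto split: if_splits)
  then obtain X where "vertex_cut V E X" "kappa V E = int (card X)"
    using ex_cut_card_eq_kappa[OF fin] by blast
  then show ?thesis
    using vertex_cut_imp_separation separation_enlarge[OF fin _ _ assms(3)] kk by fastforce
qed

subsection \<open>Counting raising sets\<close>

definition raising_edges :: "nat \<Rightarrow> nat \<Rightarrow> 'a set \<Rightarrow> 'a set set \<Rightarrow> 'a set set" where
  "raising_edges r k V E = {f. f \<subseteq> V \<and> card f = r \<and> int k + 1 \<le> kappa_bar V (insert f E)}"

definition crossing_sets :: "nat \<Rightarrow> 'a set \<Rightarrow> 'a set \<Rightarrow> 'a set set" where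
  "crossing_sets r A B = {f. f \<subseteq> A \<union> B \<and> card f = r \<and> f \<inter> A \<noteq> {} \<and> f \<inter> B \<noteq> {}}"

lemma finite_raising_edges: "finite V \<Longrightarrow> finite (raising_edges r k V E)"
  by (rule finite_subset[of _ "Pow V"]) (auto simp: raising_edges_def)

lemma finite_crossing_sets: "finite A \<Longrightarrow> finite B \<Longrightarrow> finite (crossing_sets r A B)"
  unfolding crossing_sets_def by (rule finite_subset[of _ "Pow (A \<union> B)"]) auto

lemma raising_edges_eq_empty:
  assumes "finite V" "card V < k + 2"
  shows "raising_edges r k V E = {}"
proof -
  have "\<not> int k + 1 \<le> kappa_bar V F" for F
  proof -
    obtain V' E' where "V' \<subseteq> V" "kappa V' E' = kappa_bar V F"
      using kappa_bar_attained[OF assms(1), of F] by metis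
    then show ?thesis
      using kappa_le_card_minus_1[OF finite_subset, of V' V E'] card_mono[OF assms(1), of V'] assms
      by linarith
  qed
  then show ?thesis unfolding raising_edges_def by simp
qed

lemma raising_edges_split:
  assumes fin: "finite V" and sep: "separation V E X A B"
    and kb: "kappa_bar V E \<le> int k" and cX: "card X \<le> k"
  shows "raising_edges r k V E \<subseteq>
    raising_edges r k (A \<union> X) {e\<in>E. e \<subseteq> A \<union> X} \<union>
    raising_edges r k (B \<union> X) {e\<in>E. e \<subseteq> B \<union> X} \<union> crossing_sets r A B"
proof
  fix f assume "f \<in> raising_edges r k V E"
  then have f: "card f = r" "int k + 1 \<le> kappa_bar V (insert f E)"
    unfolding raising_edges_def by auto
  have "kappa_bar V E < int k + 1" using kb by linarith
  then obtain W E' where W: "W \<subseteq> V" "E' \<subseteq> insert f E" "hypergraph W E'" "int k + 1 \<le> kappa W E'"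
    and "f \<in> E'"
    by (rule kappa_bar_insert_witness[OF fin _ f(2)])
  then have fW: "f \<subseteq> W" unfolding hypergraph_def by blast
  have s: "X \<subseteq> V" "A \<inter> B = {}" "A \<union> B = V - X"
    "\<forall>e\<in>E. e \<subseteq> V - X \<longrightarrow> e \<inter> A = {} \<or> e \<inter> B = {}"
    using sep unfolding separation_def by auto
  have side: "f \<in> raising_edges r k S {e\<in>E. e \<subseteq> S}" if "W \<subseteq> S" "S \<subseteq> V" for S
  proof -
    have "\<forall>e\<in>E'. e \<subseteq> W" using W(3) unfolding hypergraph_def by blast
    then have "E' \<subseteq> insert f {e\<in>E. e \<subseteq> S}" using W(2) that(1) by blast
    then have "kappa W E' \<le> kappa_bar S (insert f {e\<in>E. e \<subseteq> S})"
      using kappa_le_kappa_bar[OF finite_subset[OF that(2) fin] that(1) _ W(3)] by blast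
    then show ?thesis using W(4) fW f(1) that(1) unfolding raising_edges_def by auto
  qed
  have "card (W \<inter> X) \<le> k" using card_mono[OF finite_subset[OF s(1) fin], of "W \<inter> X"] cX by simp
  then have "connected_hg (W - W \<inter> X) {e\<in>E'. e \<subseteq> W - W \<inter> X}"
    using connected_hg_delete_if_card_lt_kappa[OF finite_subset[OF W(1) fin], of "W \<inter> X" E'] W(4)
    by simp
  moreover have "W - W \<inter> X = W - X" by blast
  ultimately have conn: "connected_hg (W - X) {e\<in>E'. e \<subseteq> W - X}" by simp
  show "f \<in> raising_edges r k (A \<union> X) {e\<in>E. e \<subseteq> A \<union> X} \<union>
      raising_edges r k (B \<union> X) {e\<in>E. e \<subseteq> B \<union> X} \<union> crossing_sets r A B"
  proof (cases "(W - X) \<inter> A \<noteq> {} \<and> (W - X) \<inter> B \<noteq> {}")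
    case True
    then obtain a b where "a \<in> W - X" "a \<in> A" "b \<in> W - X" "b \<notin> A" using s(2) by blast
    then obtain g where g: "g \<in> E'" "g \<subseteq> W - X" "g \<inter> A \<noteq> {}" "g - A \<noteq> {}"
      using connected_hg_crossing_edge[OF conn] by blast
    have "W - X \<subseteq> A \<union> B" using W(1) s(3) by blast
    then have gB: "g \<inter> B \<noteq> {}" using g(2,4) by blast
    have "g = f"
    proof (rule ccontr)
      assume "g \<noteq> f"
      then have "g \<in> E" using g(1) W(2) by blast
      moreover have "g \<subseteq> V - X" using g(2) W(1) by blast
      ultimately show False using s(4) g(3) gB by blast
    qed
    then have "f \<in> crossing_sets r A B"
      using g(2,3) gB f(1) \<open>W - X \<subseteq> A \<union> B\<close> unfolding crossing_sets_def by auto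
    then show ?thesis by blast
  next
    case False
    then have "W \<subseteq> A \<union> X \<or> W \<subseteq> B \<union> X" using W(1) s(3) by blast
    moreover have "A \<union> X \<subseteq> V" "B \<union> X \<subseteq> V" using s(1,3) by auto
    ultimately show ?thesis using side[of "A \<union> X"] side[of "B \<union> X"] by blast
  qed
qed

lemma card_crossing_sets:
  assumes "finite A" "finite B" "A \<inter> B = {}" "r \<ge> 1"
  shows "card (crossing_sets r A B) + (card A choose r) + (card B choose r)
         = (card A + card B) choose r"
proof -
  let ?T = "\<lambda>S. {f. f \<subseteq> S \<and> card f = r}"
  have fin: "finite (?T S)" if "finite S" for S
    using that by simp
  have split: "?T (A \<union> B) = (crossing_sets r A B \<union> ?T A) \<union> ?T B"
    unfolding crossing_sets_def by blast
  have nonempty: "f \<noteq> {}" if "card f = r" for f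
    using that assms(4) by auto
  have "crossing_sets r A B \<inter> ?T A = {}"
    unfolding crossing_sets_def using assms(3) by blast
  moreover have "(crossing_sets r A B \<union> ?T A) \<inter> ?T B = {}"
    unfolding crossing_sets_def using assms(3) nonempty by blast
  moreover have "finite (crossing_sets r A B)" using finite_crossing_sets[OF assms(1,2)] .
  ultimately have "card (?T (A \<union> B)) = card (crossing_sets r A B) + card (?T A) + card (?T B)"
    unfolding split using fin assms(1,2) by (simp add: card_Un_disjoint)
  then show ?thesis
    using n_subsets[OF assms(1)] n_subsets[OF assms(2)] n_subsets[of "A \<union> B" r] assms(1-3)
    by (simp add: card_Un_disjoint)
qed

lemma card_raising_edges_le:
  assumes "hypergraph V E" "kappa_bar V E \<le> int k" "r \<ge> 1"
  shows "card (raising_edges r k V E) \<le> (card V - k) choose r"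
  using assms(1,2)
proof (induction "card V" arbitrary: V E rule: less_induct)
  case less
  have fin: "finite V" using less.prems(1) unfolding hypergraph_def by blast
  show ?case
  proof (cases "k + 2 \<le> card V")
    case False
    then show ?thesis using raising_edges_eq_empty[OF fin] by simp
  next
    case True
    then obtain X A B where sep: "separation V E X A B" and cX: "card X = k"
      using ex_separation_card_eq less.prems by blast
    have s: "X \<subseteq> V" "A \<inter> B = {}" "A \<union> B = V - X" "A \<noteq> {}" "B \<noteq> {}"
      using sep unfolding separation_def by auto
    have finAB: "finite A" "finite B" using s(3) fin by (metis Diff_subset finite_Un finite_subset)+
    have cV: "card A + card B = card V - k"
      using card_Un_disjoint[OF finAB s(2)] card_Diff_subset[OF finite_subset[OF s(1) fin] s(1)]
        s(3) cX by simp
    let ?R = "\<lambda>S. raising_edges r k (S \<union> X) {e\<in>E. e \<subseteq> S \<union> X}"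
    have side: "card (?R S) \<le> card S choose r" if "S \<subseteq> V - X" "card S < card V - k" for S
    proof -
      have "S \<inter> X = {}" "S \<subseteq> V" using that(1) by auto
      then have "card (S \<union> X) = card S + k"
        using card_Un_disjoint[OF finite_subset[OF _ fin] finite_subset[OF s(1) fin]] cX by simp
      moreover have "hypergraph (S \<union> X) {e\<in>E. e \<subseteq> S \<union> X}"
        using less.prems(1) finite_subset[OF _ fin] \<open>S \<subseteq> V\<close> s(1) unfolding hypergraph_def by auto
      moreover have "kappa_bar (S \<union> X) {e\<in>E. e \<subseteq> S \<union> X} \<le> kappa_bar V E"
        by (rule kappa_bar_mono[OF fin]) (use \<open>S \<subseteq> V\<close> s(1) in auto)
      ultimately show ?thesis using less.hyps[of "S \<union> X"] less.prems(2) that(2) by simp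
    qed
    have "card A < card V - k" "card B < card V - k"
      using cV finAB s(4,5) card_gt_0_iff[of A] card_gt_0_iff[of B] by linarith+
    then have sides: "card (?R A) \<le> card A choose r" "card (?R B) \<le> card B choose r"
      using side s(3) by auto
    have "A \<union> X \<subseteq> V" "B \<union> X \<subseteq> V" using s(1,3) by auto
    then have "finite (?R A \<union> ?R B \<union> crossing_sets r A B)"
      using finite_raising_edges[OF finite_subset[OF _ fin]] finite_crossing_sets[OF finAB]
      by (intro finite_UnI)
    then have "card (raising_edges r k V E) \<le> card (?R A \<union> ?R B \<union> crossing_sets r A B)"
      by (rule card_mono[OF _ raising_edges_split[OF fin sep less.prems(2) eq_imp_le[OF cX]]])
    also have "\<dots> \<le> card (?R A) + card (?R B) + card (crossing_sets r A B)"
      using card_Un_le[of "?R A \<union> ?R B" "crossing_sets r A B"] card_Un_le[of "?R A" "?R B"] by linarith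
    also have "\<dots> \<le> (card A choose r) + (card B choose r) + card (crossing_sets r A B)"
      using sides by linarith
    also have "\<dots> = (card V - k) choose r"
      using card_crossing_sets[OF finAB s(2) assms(3)] cV by simp
    finally show ?thesis .
  qed
qed

lemma card_compl_edges:
  assumes "uniform r V E"
  shows "card (compl_edges r V E) + card E = card V choose r"
proof -
  have fin: "finite V" and sub: "E \<subseteq> {f. f \<subseteq> V \<and> card f = r}"
    using assms unfolding uniform_def hypergraph_def by auto
  have "compl_edges r V E = {f. f \<subseteq> V \<and> card f = r} - E"
    unfolding compl_edges_def by blast
  then show ?thesis
    using card_Diff_subset[OF _ sub] card_mono[OF _ sub] n_subsets[OF fin] fin
    by (simp add: finite_subset[OF sub])
qed

theorem theorem3p2:
  fixes V :: "'a set" and E :: "'a set set" and n k r :: nat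
  assumes "k \<ge> 2" and "r \<ge> 2" and "n \<ge> k + 1"
    and "uniform r V E" and "card V = n"
    and "vertex_k_maximal r k V E"
  shows "int (card E) \<ge> int (n choose r) - int ((n - k) choose r)"
proof -
  have hyp: "hypergraph V E" using assms(4) unfolding uniform_def by blast
  then have fin: "finite V" unfolding hypergraph_def by blast
  have kb: "kappa_bar V E \<le> int k"
    and raising: "compl_edges r V E \<subseteq> raising_edges r k V E"
    using assms(6) unfolding vertex_k_maximal_def compl_edges_def raising_edges_def by auto
  have "card (compl_edges r V E) \<le> (n - k) choose r"
    using card_mono[OF finite_raising_edges[OF fin] raising]
      card_raising_edges_le[OF hyp kb, of r] assms(2,5) by simp
  then have "n choose r \<le> card E + ((n - k) choose r)"
    using card_compl_edges[OF assms(4)] unfolding assms(5) by linarith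
  then show ?thesis by linarith
qed

end
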